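(* Let $K$ be a field, $E$ a directed graph, and $L=L_K(E)$. Let $c$ and $d$ be distinct cycles in $E$ (that is, $c$ and $d$ have distinct sets of edges), neither of which has an exit, and let $f(x),g(x)\in K[x]$ be polynomials with nonzero constant terms. Then $\langle f(c)\rangle\langle g(d)\rangle=0$.
   Context: A directed graph $E=(E^0,E^1,r,s)$ has vertex set $E^0\neq\emptyset$, edge set $E^1$, and range and source maps $r,s:E^1\to E^0$ (no cardinality restrictions). A path is a finite sequence $e_1\cdots e_n$ of edges with $r(e_i)=s(e_{i+1})$. A cycle is a path $e_1\cdots e_n$ with $r(e_n)=s(e_1)$ and $s(e_i)\neq s(e_j)$ for $i\neq j$. An exit of a path $e_1\cdots e_n$ is an edge $f\notin\{e_1,\dots,e_n\}$ with $s(f)=s(e_i)$ for some $i$. The Leavitt path algebra $L_K(E)$ is the $K$-algebra generated by $\{v:v\in E^0\}\cup\{e,e^*:e\in E^1\}$ subject to: $vw=\delta_{v,w}v$; $s(e)e=er(e)=e$; $r(e)e^*=e^*s(e)=e^*$; $e^*f=\delta_{e,f}r(e)$ for $e,f\in E^1$; and $v=\sum_{e\in s^{-1}(v)}ee^*$ whenever $s^{-1}(v)$ is finite and nonempty. For a path $\mu=e_1\cdots e_n$, $\mu$ is also viewed as the product $e_1\cdots e_n\in L_K(E)$. For a cycle $c$ based at $v$ and $f(x)=\sum_{i=0}^n k_ix^i\in K[x]$, $f(c):=k_0v+\sum_{i=1}^n k_ic^i$. $\langle X\rangle$ denotes the two-sided ideal generated by $X$. *)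

theory Defs
  imports Main "HOL-Computational_Algebra.Polynomial"
begin

record ('a, 'k) kalg =
  kcar  :: "'a set"
  kadd  :: "'a \<Rightarrow> 'a \<Rightarrow> 'a"
  kmul  :: "'a \<Rightarrow> 'a \<Rightarrow> 'a"
  kzero :: "'a"
  ksmul :: "'k \<Rightarrow> 'a \<Rightarrow> 'a"

definition is_ideal :: "('a, 'k) kalg \<Rightarrow> 'a set \<Rightarrow> bool" where
  "is_ideal A J \<longleftrightarrow> J \<subseteq> kcar A \<and> kzero A \<in> J
     \<and> (\<forall>x\<in>J. \<forall>y\<in>J. kadd A x y \<in> J)
     \<and> (\<forall>k. \<forall>x\<in>J. ksmul A k x \<in> J)
     \<and> (\<forall>a\<in>kcar A. \<forall>x\<in>J. kmul A a x \<in> J \<and> kmul A x a \<in> J)"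

definition gen_ideal :: "('a, 'k) kalg \<Rightarrow> 'a set \<Rightarrow> 'a set" where
  "gen_ideal A X = \<Inter>{J. is_ideal A J \<and> X \<subseteq> J}"

definition is_subspace :: "('a, 'k) kalg \<Rightarrow> 'a set \<Rightarrow> bool" where
  "is_subspace A S \<longleftrightarrow> S \<subseteq> kcar A \<and> kzero A \<in> S
     \<and> (\<forall>x\<in>S. \<forall>y\<in>S. kadd A x y \<in> S) \<and> (\<forall>k. \<forall>x\<in>S. ksmul A k x \<in> S)"

definition ideal_product :: "('a, 'k) kalg \<Rightarrow> 'a set \<Rightarrow> 'a set \<Rightarrow> 'a set" where
  "ideal_product A I J = \<Inter>{S. is_subspace A S \<and> {kmul A i j | i j. i \<in> I \<and> j \<in> J} \<subseteq> S}"

datatype ('v, 'e) lgen = V 'v | Ed 'e | Gh 'e  \<comment> \<open>v, e, e*\<close>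

type_synonym ('v, 'e, 'k) fel = "('v, 'e) lgen list \<Rightarrow> 'k"

text \<open>Elements of the free (non-unital) algebra: finitely supported coefficient
  functions on nonempty words.\<close>
definition fcar :: "('v, 'e, 'k::field) fel set" where
  "fcar = {p. finite {w. p w \<noteq> 0} \<and> p [] = 0}"

definition fadd :: "('v, 'e, 'k::field) fel \<Rightarrow> ('v, 'e, 'k) fel \<Rightarrow> ('v, 'e, 'k) fel" where
  "fadd p q = (\<lambda>w. p w + q w)"

definition fsub :: "('v, 'e, 'k::field) fel \<Rightarrow> ('v, 'e, 'k) fel \<Rightarrow> ('v, 'e, 'k) fel" where
  "fsub p q = (\<lambda>w. p w - q w)"

definition fsmul :: "'k::field \<Rightarrow> ('v, 'e, 'k) fel \<Rightarrow> ('v, 'e, 'k) fel" where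
  "fsmul k p = (\<lambda>w. k * p w)"

definition fmul :: "('v, 'e, 'k::field) fel \<Rightarrow> ('v, 'e, 'k) fel \<Rightarrow> ('v, 'e, 'k) fel" where
  "fmul p q = (\<lambda>w. \<Sum>i\<le>length w. p (take i w) * q (drop i w))"

definition fzero :: "('v, 'e, 'k::field) fel" where
  "fzero = (\<lambda>w. 0)"

definition mono :: "('v, 'e) lgen list \<Rightarrow> ('v, 'e, 'k::field) fel" where
  "mono u = (\<lambda>w. if w = u then 1 else 0)"

definition FA :: "(('v, 'e, 'k::field) fel, 'k) kalg" where
  "FA = \<lparr> kcar = fcar, kadd = fadd, kmul = fmul, kzero = fzero, ksmul = fsmul \<rparr>"

abbreviation gv :: "'v \<Rightarrow> ('v, 'e, 'k::field) fel" where "gv v \<equiv> mono [V v]"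
abbreviation ge :: "'e \<Rightarrow> ('v, 'e, 'k::field) fel" where "ge e \<equiv> mono [Ed e]"
abbreviation gs :: "'e \<Rightarrow> ('v, 'e, 'k::field) fel" where "gs e \<equiv> mono [Gh e]"

section \<open>Leavitt path algebra of the graph E = (UNIV::'v set, UNIV::'e set, r, s)\<close>

definition leavitt_rels :: "('e \<Rightarrow> 'v) \<Rightarrow> ('e \<Rightarrow> 'v) \<Rightarrow> ('v, 'e, 'k::field) fel set" where
  "leavitt_rels r s =
     {fsub (fmul (gv v) (gv w)) (if v = w then gv v else fzero) | v w. True}
   \<union> {fsub (fmul (gv (s e)) (ge e)) (ge e) | e. True}
   \<union> {fsub (fmul (ge e) (gv (r e))) (ge e) | e. True}
   \<union> {fsub (fmul (gv (r e)) (gs e)) (gs e) | e. True}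
   \<union> {fsub (fmul (gs e) (gv (s e))) (gs e) | e. True}
   \<union> {fsub (fmul (gs e) (ge f)) (if e = f then gv (r e) else fzero) | e f. True}
   \<union> {fsub (gv v) (\<lambda>w. \<Sum>e\<in>{e. s e = v}. fmul (ge e) (gs e) w) | v.
        finite {e. s e = v} \<and> {e. s e = v} \<noteq> {}}"

definition leavitt_ideal :: "('e \<Rightarrow> 'v) \<Rightarrow> ('e \<Rightarrow> 'v) \<Rightarrow> ('v, 'e, 'k::field) fel set" where
  "leavitt_ideal r s = gen_ideal FA (leavitt_rels r s)"

definition lcls :: "('e \<Rightarrow> 'v) \<Rightarrow> ('e \<Rightarrow> 'v) \<Rightarrow> ('v, 'e, 'k::field) fel \<Rightarrow> ('v, 'e, 'k) fel set" where
  "lcls r s x = {y \<in> fcar. fsub y x \<in> leavitt_ideal r s}"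

definition lrep :: "('v, 'e, 'k::field) fel set \<Rightarrow> ('v, 'e, 'k) fel" where
  "lrep X = (SOME x. x \<in> X)"

definition LPA :: "('e \<Rightarrow> 'v) \<Rightarrow> ('e \<Rightarrow> 'v) \<Rightarrow> (('v, 'e, 'k::field) fel set, 'k) kalg" where
  "LPA r s = \<lparr> kcar = lcls r s ` fcar,
      kadd = (\<lambda>X Y. lcls r s (fadd (lrep X) (lrep Y))),
      kmul = (\<lambda>X Y. lcls r s (fmul (lrep X) (lrep Y))),
      kzero = lcls r s fzero,
      ksmul = (\<lambda>k X. lcls r s (fsmul k (lrep X))) \<rparr>"

definition is_path :: "('e \<Rightarrow> 'v) \<Rightarrow> ('e \<Rightarrow> 'v) \<Rightarrow> 'e list \<Rightarrow> bool" where
  "is_path r s p \<longleftrightarrow> p \<noteq> [] \<and> (\<forall>i. Suc i < length p \<longrightarrow> r (p ! i) = s (p ! Suc i))"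

definition is_cycle :: "('e \<Rightarrow> 'v) \<Rightarrow> ('e \<Rightarrow> 'v) \<Rightarrow> 'e list \<Rightarrow> bool" where
  "is_cycle r s p \<longleftrightarrow> is_path r s p \<and> r (last p) = s (hd p) \<and> distinct (map s p)"

definition has_exit :: "('e \<Rightarrow> 'v) \<Rightarrow> 'e list \<Rightarrow> bool" where
  "has_exit s p \<longleftrightarrow> (\<exists>f. f \<notin> set p \<and> (\<exists>i<length p. s f = s (p ! i)))"

text \<open>f(c) = k_0 v + sum_{i>=1} k_i c^i in the free algebra, v = s(first edge of c).\<close>
definition poly_cycle :: "('e \<Rightarrow> 'v) \<Rightarrow> 'k::field poly \<Rightarrow> 'e list \<Rightarrow> ('v, 'e, 'k) fel" where
  "poly_cycle s f c = (\<lambda>w. (if w = [V (s (hd c))] then coeff f 0 else 0)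
      + (\<Sum>i\<in>{1..degree f}. if w = concat (replicate i (map Ed c)) then coeff f i else 0))"

end

theory Submission
  imports Defs
begin

text \<open>Let \<open>v\<close> and \<open>u\<close> be the base vertices of \<open>c\<close> and \<open>d\<close>. Since \<open>c\<close> has no exit, every edge
  leaving a vertex of \<open>c\<close> lies on \<open>c\<close>, so the vertex set of \<open>c\<close> is hereditary; the same holds
  for \<open>d\<close>, and two distinct exitless cycles sharing a vertex would contain each other, so the two
  vertex sets are disjoint. Reducing words in the generators to the form \<open>\<alpha>\<beta>*\<close> shows that
  \<open>v \<alpha> \<beta>* u\<close> can only be nonzero if some vertex is reachable both from \<open>v\<close> and from \<open>u\<close>;
  hence \<open>v L u = 0\<close>. Finally \<open>f(c) = f(c) v\<close> and \<open>g(d) = u g(d)\<close>, so every product of an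
  element of \<open>\<langle>f(c)\<rangle>\<close> with an element of \<open>\<langle>g(d)\<rangle>\<close> factors through \<open>v L u\<close>.\<close>

section \<open>The free algebra\<close>

definition splits :: "'a list \<Rightarrow> ('a list \<times> 'a list) set" where
  "splits w = {(u, v). u @ v = w}"

lemma splits_conv_take_drop: "splits w = (\<lambda>i. (take i w, drop i w)) ` {..length w}"
proof (rule set_eqI)
  fix x :: "'a list \<times> 'a list"
  obtain u v where x: "x = (u, v)" by (cases x)
  show "x \<in> splits w \<longleftrightarrow> x \<in> (\<lambda>i. (take i w, drop i w)) ` {..length w}"
    unfolding x splits_def by (auto intro!: image_eqI[where x = "length u"])
qed

lemma finite_splits [simp]: "finite (splits w)"
  by (simp add: splits_conv_take_drop)

lemma fmul_conv_splits: "fmul a b w = (\<Sum>(u, v)\<in>splits w. a u * b v)"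
proof -
  have "inj_on (\<lambda>i. (take i w, drop i w)) {..length w}"
    by (rule inj_onI) (metis atMost_iff length_take min.absorb2 prod.inject)
  then show ?thesis
    by (simp add: fmul_def splits_conv_take_drop sum.reindex)
qed

lemma fmul_assoc:
  fixes a b c :: "('v, 'e, 'k::field) fel"
  shows "fmul (fmul a b) c = fmul a (fmul b c)"
proof (rule ext)
  fix w :: "('v, 'e) lgen list"
  define T where "T = {(u, v, z). u @ v @ z = w}"
  have "fmul (fmul a b) c w
      = (\<Sum>(p, q)\<in>Sigma (splits w) (\<lambda>p. splits (fst p)). a (fst q) * b (snd q) * c (snd p))"
    by (simp add: fmul_conv_splits case_prod_unfold sum_distrib_right sum.Sigma)
  also have "\<dots> = (\<Sum>(u, v, z)\<in>T. a u * b v * c z)"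
    by (rule sum.reindex_bij_witness[where i = "\<lambda>(u, v, z). ((u @ v, z), (u, v))"
          and j = "\<lambda>((_, z), (u, v)). (u, v, z)"]) (auto simp: splits_def T_def)
  also have "\<dots>
      = (\<Sum>(p, q)\<in>Sigma (splits w) (\<lambda>p. splits (snd p)). a (fst p) * b (fst q) * c (snd q))"
    by (rule sum.reindex_bij_witness[where i = "\<lambda>((u, _), (v, z)). (u, v, z)"
          and j = "\<lambda>(u, v, z). ((u, v @ z), (v, z))"]) (auto simp: splits_def T_def)
  also have "\<dots> = fmul a (fmul b c) w"
    by (simp add: fmul_conv_splits case_prod_unfold sum_distrib_left mult.assoc sum.Sigma)
  finally show "fmul (fmul a b) c w = fmul a (fmul b c) w" .
qed

lemma fmul_fadd_left: "fmul (fadd a b) c = fadd (fmul a c) (fmul b c)"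
  by (rule ext) (simp add: fmul_def fadd_def distrib_right sum.distrib)

lemma fmul_fadd_right: "fmul c (fadd a b) = fadd (fmul c a) (fmul c b)"
  by (rule ext) (simp add: fmul_def fadd_def distrib_left sum.distrib)

lemma fmul_fsub_left: "fmul (fsub a b) c = fsub (fmul a c) (fmul b c)"
  by (rule ext) (simp add: fmul_def fsub_def left_diff_distrib sum_subtractf)

lemma fmul_fsub_right: "fmul c (fsub a b) = fsub (fmul c a) (fmul c b)"
  by (rule ext) (simp add: fmul_def fsub_def right_diff_distrib sum_subtractf)

lemma fmul_fsmul_left: "fmul (fsmul k a) b = fsmul k (fmul a b)"
  by (rule ext) (simp add: fmul_def fsmul_def sum_distrib_left mult.assoc)

lemma fmul_fsmul_right: "fmul a (fsmul k b) = fsmul k (fmul a b)"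
  by (rule ext) (simp add: fmul_def fsmul_def sum_distrib_left mult.left_commute)

lemma fmul_fzero_left [simp]: "fmul fzero a = fzero"
  by (rule ext) (simp add: fmul_def fzero_def)

lemma fmul_fzero_right [simp]: "fmul a fzero = fzero"
  by (rule ext) (simp add: fmul_def fzero_def)

lemma fsub_fzero [simp]: "fsub a fzero = a"
  by (rule ext) (simp add: fsub_def fzero_def)

lemma fadd_fsub_cancel: "fadd b (fsub a b) = a"
  by (rule ext) (simp add: fadd_def fsub_def)

lemma fmul_mono_mono: "fmul (mono u) (mono v) = mono (u @ v)"
proof (rule ext)
  fix w
  have delta: "(\<lambda>(x, y). mono u x * mono v y) = (\<lambda>p. if p = (u, v) then 1 else 0)"
    by (auto simp: Defs.mono_def)
  show "fmul (mono u) (mono v) w = mono (u @ v) w"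
    unfolding fmul_conv_splits delta
    by (subst sum.delta[OF finite_splits]) (auto simp: splits_def Defs.mono_def)
qed

lemma fmul_mono_Nil_left: "fmul (mono []) a = a"
proof (rule ext)
  fix w
  have "fmul (mono []) a w = (\<Sum>i\<le>length w. if i = 0 then a w else 0)"
    unfolding fmul_def by (rule sum.cong) (auto simp: Defs.mono_def)
  then show "fmul (mono []) a w = a w" by simp
qed

lemma fmul_mono_Nil_right: "fmul a (mono []) = a"
proof (rule ext)
  fix w
  have "fmul a (mono []) w = (\<Sum>i\<le>length w. if i = length w then a w else 0)"
    unfolding fmul_def by (rule sum.cong) (auto simp: Defs.mono_def)
  then show "fmul a (mono []) w = a w" by simp
qed

lemma fmul_lincomb_left:
  "fmul (\<lambda>w. \<Sum>i\<in>A. k i * h i w) b = (\<lambda>w. \<Sum>i\<in>A. k i * fmul (h i) b w)"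
  by (rule ext)
    (simp add: fmul_def sum_distrib_left sum_distrib_right mult.assoc sum.swap[where A = A])

lemma fmul_lincomb_right:
  "fmul b (\<lambda>w. \<Sum>i\<in>A. k i * h i w) = (\<lambda>w. \<Sum>i\<in>A. k i * fmul b (h i) w)"
  by (rule ext) (simp add: fmul_def sum_distrib_left mult.left_commute sum.swap[where A = A])

lemma fzero_fcar: "fzero \<in> fcar"
  by (simp add: fcar_def fzero_def)

lemma mono_fcar:
  assumes "u \<noteq> []"
  shows "(mono u :: ('v, 'e, 'k::field) fel) \<in> fcar"
proof -
  have "{w. (mono u :: ('v, 'e, 'k) fel) w \<noteq> 0} \<subseteq> {u}"
    by (auto simp: Defs.mono_def)
  with assms show ?thesis
    by (auto intro: finite_subset simp: fcar_def Defs.mono_def)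
qed

lemma fcar_fadd: "a \<in> fcar \<Longrightarrow> b \<in> fcar \<Longrightarrow> fadd a b \<in> fcar"
proof -
  assume "a \<in> fcar" "b \<in> fcar"
  moreover have "{w. fadd a b w \<noteq> 0} \<subseteq> {w. a w \<noteq> 0} \<union> {w. b w \<noteq> 0}"
    by (auto simp: fadd_def)
  ultimately show ?thesis
    by (auto intro: finite_subset simp: fcar_def fadd_def)
qed

lemma fcar_fsmul: "a \<in> fcar \<Longrightarrow> fsmul k a \<in> fcar"
proof -
  assume "a \<in> fcar"
  moreover have "{w. fsmul k a w \<noteq> 0} \<subseteq> {w. a w \<noteq> 0}"
    by (auto simp: fsmul_def)
  ultimately show ?thesis
    by (auto intro: finite_subset simp: fcar_def fsmul_def)
qed

lemma fsub_conv_fadd_fsmul: "fsub a b = fadd a (fsmul (-1) b)"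
  by (rule ext) (simp add: fsub_def fadd_def fsmul_def)

lemma fcar_fsub: "a \<in> fcar \<Longrightarrow> b \<in> fcar \<Longrightarrow> fsub a b \<in> fcar"
  by (simp add: fsub_conv_fadd_fsmul fcar_fadd fcar_fsmul)

lemma fcar_fmul: "a \<in> fcar \<Longrightarrow> b \<in> fcar \<Longrightarrow> fmul a b \<in> fcar"
proof -
  assume a: "a \<in> fcar" and b: "b \<in> fcar"
  have "{w. fmul a b w \<noteq> 0} \<subseteq> (\<lambda>(u, v). u @ v) ` ({u. a u \<noteq> 0} \<times> {v. b v \<noteq> 0})"
  proof
    fix w assume "w \<in> {w. fmul a b w \<noteq> 0}"
    then obtain u v where "(u, v) \<in> splits w" "a u * b v \<noteq> 0"
      by (auto simp: fmul_conv_splits elim: sum.not_neutral_contains_not_neutral)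
    then show "w \<in> (\<lambda>(u, v). u @ v) ` ({u. a u \<noteq> 0} \<times> {v. b v \<noteq> 0})"
      by (force simp: splits_def)
  qed
  moreover have "finite ({u. a u \<noteq> 0} \<times> {v. b v \<noteq> 0})"
    using a b by (simp add: fcar_def)
  ultimately show ?thesis
    using a unfolding fcar_def by (auto intro: finite_subset simp: fmul_def)
qed

lemma is_ideal_fcar: "is_ideal FA fcar"
  by (simp add: is_ideal_def FA_def fzero_fcar fcar_fadd fcar_fsmul fcar_fmul)

lemma ideal_lincomb:
  assumes J: "is_ideal FA J" and "finite A" "\<forall>i\<in>A. h i \<in> J"
  shows "(\<lambda>w. \<Sum>i\<in>A. k i * h i w) \<in> J"
  using assms(2,3)
proof (induction A rule: finite_induct)
  case empty
  then show ?case using J by (simp add: is_ideal_def FA_def fzero_def)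
next
  case (insert i A)
  then have "(\<lambda>w. \<Sum>i\<in>insert i A. k i * h i w) = fadd (fsmul (k i) (h i)) (\<lambda>w. \<Sum>i\<in>A. k i * h i w)"
    by (simp add: fadd_def fsmul_def)
  then show ?case using insert J by (simp add: is_ideal_def FA_def)
qed

lemma fcar_eq_lincomb_mono:
  assumes "a \<in> fcar"
  shows "a = (\<lambda>w. \<Sum>u\<in>{u. a u \<noteq> 0}. a u * mono u w)"
proof (rule ext)
  fix w
  have "(\<Sum>u\<in>{u. a u \<noteq> 0}. a u * mono u w) = (\<Sum>u\<in>{u. a u \<noteq> 0}. if u = w then a w else 0)"
    by (rule sum.cong) (auto simp: Defs.mono_def)
  with assms show "a w = (\<Sum>u\<in>{u. a u \<noteq> 0}. a u * mono u w)"
    by (simp add: sum.delta fcar_def)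
qed

section \<open>The ideal of Leavitt relations\<close>

lemma gen_ideal_subset: "is_ideal A J \<Longrightarrow> X \<subseteq> J \<Longrightarrow> gen_ideal A X \<subseteq> J"
  unfolding gen_ideal_def by blast

lemma is_ideal_gen_ideal:
  assumes "is_ideal A J" "X \<subseteq> J"
  shows "is_ideal A (gen_ideal A X)"
proof -
  have "gen_ideal A X \<subseteq> kcar A"
    using gen_ideal_subset[OF assms] assms(1) by (auto simp: is_ideal_def)
  then show ?thesis
    unfolding is_ideal_def
  proof (intro conjI ballI allI)
    fix x y assume "x \<in> gen_ideal A X" "y \<in> gen_ideal A X"
    then show "kadd A x y \<in> gen_ideal A X"
      by (auto simp: gen_ideal_def is_ideal_def)
  next
    fix k x assume "x \<in> gen_ideal A X"
    then show "ksmul A k x \<in> gen_ideal A X"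
      by (auto simp: gen_ideal_def is_ideal_def)
  next
    fix a x assume "a \<in> kcar A" "x \<in> gen_ideal A X"
    then show "kmul A a x \<in> gen_ideal A X" "kmul A x a \<in> gen_ideal A X"
      by (auto simp: gen_ideal_def is_ideal_def)
  qed (auto simp: gen_ideal_def is_ideal_def)
qed

lemma leavitt_rels_subset_fcar: "leavitt_rels r s \<subseteq> fcar"
proof -
  have sum: "(\<lambda>w. \<Sum>e\<in>A. mono [Ed e, Gh e] w) \<in> fcar" if "finite A" for A
    using ideal_lincomb[OF is_ideal_fcar that, where h = "\<lambda>e. mono [Ed e, Gh e]" and k = "\<lambda>_. 1"]
    by (simp add: mono_fcar)
  show ?thesis
    unfolding leavitt_rels_def
    by (auto intro!: fcar_fsub mono_fcar sum simp: fmul_mono_mono fzero_fcar)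
qed

lemma is_ideal_leavitt_ideal: "is_ideal FA (leavitt_ideal r s)"
  unfolding leavitt_ideal_def
  by (rule is_ideal_gen_ideal[OF is_ideal_fcar leavitt_rels_subset_fcar])

lemma leavitt_ideal_subset_fcar: "leavitt_ideal r s \<subseteq> fcar"
  unfolding leavitt_ideal_def by (rule gen_ideal_subset[OF is_ideal_fcar leavitt_rels_subset_fcar])

lemma leavitt_rels_in_ideal: "x \<in> leavitt_rels r s \<Longrightarrow> x \<in> leavitt_ideal r s"
  unfolding leavitt_ideal_def gen_ideal_def by auto

lemma leavitt_ideal_fzero: "fzero \<in> leavitt_ideal r s"
  unfolding leavitt_ideal_def gen_ideal_def is_ideal_def FA_def by auto

lemma leavitt_ideal_fadd:
  "x \<in> leavitt_ideal r s \<Longrightarrow> y \<in> leavitt_ideal r s \<Longrightarrow> fadd x y \<in> leavitt_ideal r s"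
  unfolding leavitt_ideal_def gen_ideal_def is_ideal_def FA_def by auto

lemma leavitt_ideal_fsmul: "x \<in> leavitt_ideal r s \<Longrightarrow> fsmul k x \<in> leavitt_ideal r s"
  unfolding leavitt_ideal_def gen_ideal_def is_ideal_def FA_def by auto

lemma leavitt_ideal_fmul_left: "a \<in> fcar \<Longrightarrow> x \<in> leavitt_ideal r s \<Longrightarrow> fmul a x \<in> leavitt_ideal r s"
  unfolding leavitt_ideal_def gen_ideal_def is_ideal_def FA_def by auto

lemma leavitt_ideal_fmul_right: "a \<in> fcar \<Longrightarrow> x \<in> leavitt_ideal r s \<Longrightarrow> fmul x a \<in> leavitt_ideal r s"
  unfolding leavitt_ideal_def gen_ideal_def is_ideal_def FA_def by auto

lemma leavitt_ideal_fsub: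
  "x \<in> leavitt_ideal r s \<Longrightarrow> y \<in> leavitt_ideal r s \<Longrightarrow> fsub x y \<in> leavitt_ideal r s"
  by (simp add: fsub_conv_fadd_fsmul leavitt_ideal_fadd leavitt_ideal_fsmul)

lemma leavitt_ideal_mono_context:
  "x \<in> leavitt_ideal r s \<Longrightarrow> fmul (mono p) (fmul x (mono q)) \<in> leavitt_ideal r s"
  by (cases "p = []"; cases "q = []")
    (auto simp: fmul_mono_Nil_left fmul_mono_Nil_right mono_fcar
      leavitt_ideal_fmul_left leavitt_ideal_fmul_right)

lemma mono_context_in_leavitt_ideal:
  "(mono l :: ('v, 'e, 'k::field) fel) \<in> leavitt_ideal r s \<Longrightarrow>
    (mono (p @ l @ q) :: ('v, 'e, 'k) fel) \<in> leavitt_ideal r s"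
  by (drule leavitt_ideal_mono_context[where p = p and q = q]) (simp add: fmul_mono_mono)

definition leavitt_equiv ::
    "('e \<Rightarrow> 'v) \<Rightarrow> ('e \<Rightarrow> 'v) \<Rightarrow> ('v, 'e, 'k::field) fel \<Rightarrow> ('v, 'e, 'k) fel \<Rightarrow> bool"
  where "leavitt_equiv r s a b \<longleftrightarrow> fsub a b \<in> leavitt_ideal r s"

lemma leavitt_equiv_refl: "leavitt_equiv r s a a"
proof -
  have "fsub a a = fzero" by (rule ext) (simp add: fsub_def fzero_def)
  then show ?thesis by (simp add: leavitt_equiv_def leavitt_ideal_fzero)
qed

lemma leavitt_equiv_sym: "leavitt_equiv r s a b \<Longrightarrow> leavitt_equiv r s b a"
proof -
  have "fsub b a = fsmul (-1) (fsub a b)" by (rule ext) (simp add: fsub_def fsmul_def)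
  then show "leavitt_equiv r s a b \<Longrightarrow> leavitt_equiv r s b a"
    by (simp add: leavitt_equiv_def leavitt_ideal_fsmul)
qed

lemma leavitt_equiv_trans: "leavitt_equiv r s a b \<Longrightarrow> leavitt_equiv r s b c \<Longrightarrow> leavitt_equiv r s a c"
proof -
  have "fsub a c = fadd (fsub a b) (fsub b c)" by (rule ext) (simp add: fsub_def fadd_def)
  then show "leavitt_equiv r s a b \<Longrightarrow> leavitt_equiv r s b c \<Longrightarrow> leavitt_equiv r s a c"
    by (simp add: leavitt_equiv_def leavitt_ideal_fadd)
qed

lemma leavitt_equiv_in_ideal:
  "leavitt_equiv r s a b \<Longrightarrow> b \<in> leavitt_ideal r s \<Longrightarrow> a \<in> leavitt_ideal r s"
  by (metis fadd_fsub_cancel leavitt_equiv_def leavitt_ideal_fadd)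

lemma leavitt_equiv_fmul_left:
  "leavitt_equiv r s a b \<Longrightarrow> c \<in> fcar \<Longrightarrow> leavitt_equiv r s (fmul c a) (fmul c b)"
  by (simp add: leavitt_equiv_def fmul_fsub_right[symmetric] leavitt_ideal_fmul_left)

lemma leavitt_equiv_fmul_right:
  "leavitt_equiv r s a b \<Longrightarrow> c \<in> fcar \<Longrightarrow> leavitt_equiv r s (fmul a c) (fmul b c)"
  by (simp add: leavitt_equiv_def fmul_fsub_left[symmetric] leavitt_ideal_fmul_right)

lemma leavitt_equiv_mono_context:
  "leavitt_equiv r s (mono l :: ('v, 'e, 'k::field) fel) (mono l') \<Longrightarrow>
    leavitt_equiv r s (mono (p @ l @ q) :: ('v, 'e, 'k) fel) (mono (p @ l' @ q))"
  unfolding leavitt_equiv_def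
  by (drule leavitt_ideal_mono_context[where p = p and q = q])
    (simp add: fmul_fsub_left fmul_fsub_right fmul_mono_mono)

lemma leavitt_equiv_lincomb:
  assumes "finite A" "\<forall>i\<in>A. leavitt_equiv r s (h i) (h' i)"
  shows "leavitt_equiv r s (\<lambda>w. \<Sum>i\<in>A. k i * h i w) (\<lambda>w. \<Sum>i\<in>A. k i * h' i w)"
proof -
  have "fsub (\<lambda>w. \<Sum>i\<in>A. k i * h i w) (\<lambda>w. \<Sum>i\<in>A. k i * h' i w)
      = (\<lambda>w. \<Sum>i\<in>A. k i * fsub (h i) (h' i) w)"
    by (rule ext) (simp add: fsub_def sum_subtractf right_diff_distrib)
  with assms show ?thesis
    by (simp add: leavitt_equiv_def ideal_lincomb[OF is_ideal_leavitt_ideal])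
qed

lemma leavitt_equiv_of_rel: "fsub a b \<in> leavitt_rels r s \<Longrightarrow> leavitt_equiv r s a b"
  by (simp add: leavitt_equiv_def leavitt_rels_in_ideal)

lemma leavitt_ideal_of_rel: "fsub a fzero \<in> leavitt_rels r s \<Longrightarrow> a \<in> leavitt_ideal r s"
  using leavitt_rels_in_ideal by fastforce

lemma leavitt_equiv_vertex_vertex:
  "leavitt_equiv r s (mono [V v, V v] :: ('v, 'e, 'k::field) fel) (mono [V v])"
  by (rule leavitt_equiv_of_rel) (unfold leavitt_rels_def, auto simp: fmul_mono_mono)

lemma leavitt_equiv_source_edge:
  "leavitt_equiv r s (mono [V (s e), Ed e] :: ('v, 'e, 'k::field) fel) (mono [Ed e])"
  by (rule leavitt_equiv_of_rel) (unfold leavitt_rels_def, auto simp: fmul_mono_mono)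

lemma leavitt_equiv_edge_range:
  "leavitt_equiv r s (mono [Ed e, V (r e)] :: ('v, 'e, 'k::field) fel) (mono [Ed e])"
  by (rule leavitt_equiv_of_rel) (unfold leavitt_rels_def, auto simp: fmul_mono_mono)

lemma leavitt_equiv_range_ghost:
  "leavitt_equiv r s (mono [V (r e), Gh e] :: ('v, 'e, 'k::field) fel) (mono [Gh e])"
  by (rule leavitt_equiv_of_rel) (unfold leavitt_rels_def, auto simp: fmul_mono_mono)

lemma leavitt_equiv_ghost_source:
  "leavitt_equiv r s (mono [Gh e, V (s e)] :: ('v, 'e, 'k::field) fel) (mono [Gh e])"
  by (rule leavitt_equiv_of_rel) (unfold leavitt_rels_def, auto simp: fmul_mono_mono)

lemma leavitt_equiv_ghost_edge:
  "leavitt_equiv r s (mono [Gh e, Ed e] :: ('v, 'e, 'k::field) fel) (mono [V (r e)])"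
  by (rule leavitt_equiv_of_rel) (unfold leavitt_rels_def, auto simp: fmul_mono_mono)

lemma vertex_vertex_in_leavitt_ideal:
  "v \<noteq> w \<Longrightarrow> (mono [V v, V w] :: ('v, 'e, 'k::field) fel) \<in> leavitt_ideal r s"
  by (rule leavitt_ideal_of_rel) (unfold leavitt_rels_def, auto simp: fmul_mono_mono)

lemma ghost_edge_in_leavitt_ideal:
  "e \<noteq> f \<Longrightarrow> (mono [Gh e, Ed f] :: ('v, 'e, 'k::field) fel) \<in> leavitt_ideal r s"
  by (rule leavitt_ideal_of_rel) (unfold leavitt_rels_def, auto simp: fmul_mono_mono)

lemma vertex_edge_in_leavitt_ideal:
  assumes "v \<noteq> s f"
  shows "(mono [V v, Ed f] :: ('v, 'e, 'k::field) fel) \<in> leavitt_ideal r s"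
proof -
  have "leavitt_equiv r s (mono ([V v] @ [Ed f] @ []))
      (mono ([V v] @ [V (s f), Ed f] @ []) :: ('v, 'e, 'k) fel)"
    by (rule leavitt_equiv_mono_context, rule leavitt_equiv_sym, rule leavitt_equiv_source_edge)
  moreover have "(mono ([] @ [V v, V (s f)] @ [Ed f]) :: ('v, 'e, 'k) fel) \<in> leavitt_ideal r s"
    using assms by (intro mono_context_in_leavitt_ideal vertex_vertex_in_leavitt_ideal)
  ultimately show ?thesis by (auto intro: leavitt_equiv_in_ideal)
qed

lemma vertex_ghost_in_leavitt_ideal:
  assumes "v \<noteq> r f"
  shows "(mono [V v, Gh f] :: ('v, 'e, 'k::field) fel) \<in> leavitt_ideal r s"
proof -
  have "leavitt_equiv r s (mono ([V v] @ [Gh f] @ []))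
      (mono ([V v] @ [V (r f), Gh f] @ []) :: ('v, 'e, 'k) fel)"
    by (rule leavitt_equiv_mono_context, rule leavitt_equiv_sym, rule leavitt_equiv_range_ghost)
  moreover have "(mono ([] @ [V v, V (r f)] @ [Gh f]) :: ('v, 'e, 'k) fel) \<in> leavitt_ideal r s"
    using assms by (intro mono_context_in_leavitt_ideal vertex_vertex_in_leavitt_ideal)
  ultimately show ?thesis by (auto intro: leavitt_equiv_in_ideal)
qed

lemma ghost_vertex_in_leavitt_ideal:
  assumes "v \<noteq> s e"
  shows "(mono [Gh e, V v] :: ('v, 'e, 'k::field) fel) \<in> leavitt_ideal r s"
proof -
  have "leavitt_equiv r s (mono ([] @ [Gh e] @ [V v]))
      (mono ([] @ [Gh e, V (s e)] @ [V v]) :: ('v, 'e, 'k) fel)"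
    by (rule leavitt_equiv_mono_context, rule leavitt_equiv_sym, rule leavitt_equiv_ghost_source)
  moreover have "(mono ([Gh e] @ [V (s e), V v] @ []) :: ('v, 'e, 'k) fel) \<in> leavitt_ideal r s"
    using assms by (intro mono_context_in_leavitt_ideal vertex_vertex_in_leavitt_ideal) simp
  ultimately show ?thesis by (auto intro: leavitt_equiv_in_ideal)
qed

lemma ghost_ghost_in_leavitt_ideal:
  assumes "s e \<noteq> r f"
  shows "(mono [Gh e, Gh f] :: ('v, 'e, 'k::field) fel) \<in> leavitt_ideal r s"
proof -
  have "leavitt_equiv r s (mono ([] @ [Gh e] @ [Gh f]))
      (mono ([] @ [Gh e, V (s e)] @ [Gh f]) :: ('v, 'e, 'k) fel)"
    by (rule leavitt_equiv_mono_context, rule leavitt_equiv_sym, rule leavitt_equiv_ghost_source)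
  moreover have "(mono ([Gh e] @ [V (s e), Gh f] @ []) :: ('v, 'e, 'k) fel) \<in> leavitt_ideal r s"
    using assms by (intro mono_context_in_leavitt_ideal vertex_ghost_in_leavitt_ideal)
  ultimately show ?thesis by (auto intro: leavitt_equiv_in_ideal)
qed

section \<open>Reduction of words to the form \<alpha>\<beta>*\<close>

fun walk :: "('e \<Rightarrow> 'v) \<Rightarrow> ('e \<Rightarrow> 'v) \<Rightarrow> 'v \<Rightarrow> 'e list \<Rightarrow> 'v \<Rightarrow> bool" where
  "walk r s x [] y \<longleftrightarrow> x = y"
| "walk r s x (e # p) y \<longleftrightarrow> s e = x \<and> walk r s (r e) p y"

lemma walk_snoc: "walk r s x (p @ [e]) y \<longleftrightarrow> walk r s x p (s e) \<and> y = r e"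
  by (induction p arbitrary: x) auto

text \<open>\<open>path_word \<alpha> z \<beta>\<close> is the monomial \<open>\<alpha>\<beta>*\<close> with the common range \<open>z\<close> of \<open>\<alpha>\<close> and \<open>\<beta>\<close> made
  explicit; recall \<open>(e\<^sub>1 \<dots> e\<^sub>n)* = e\<^sub>n* \<dots> e\<^sub>1*\<close>.\<close>

definition path_word :: "'e list \<Rightarrow> 'v \<Rightarrow> 'e list \<Rightarrow> ('v, 'e) lgen list" where
  "path_word \<alpha> z \<beta> = map Ed \<alpha> @ [V z] @ rev (map Gh \<beta>)"

lemma path_word_Nil: "path_word \<alpha> z [] = map Ed \<alpha> @ [V z]"
  by (simp add: path_word_def)

lemma path_word_Cons: "path_word \<alpha> z (e # \<beta>) = path_word \<alpha> z \<beta> @ [Gh e]"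
  by (simp add: path_word_def)

lemma path_word_last_letter:
  assumes "walk r s y \<beta> z"
  obtains p where "path_word \<alpha> z \<beta> = p @ [V y]"
  | p e where "path_word \<alpha> z \<beta> = p @ [Gh e]" "s e = y"
  using assms by (cases \<beta>) (auto simp: path_word_Nil path_word_Cons)

lemma path_word_snoc_vertex:
  assumes "walk r s y \<beta> z"
  shows "leavitt_equiv r s (mono (path_word \<alpha> z \<beta> @ [V y]) :: ('v, 'e, 'k::field) fel)
      (mono (path_word \<alpha> z \<beta>))"
  using assms
proof (cases rule: path_word_last_letter[where \<alpha> = \<alpha>])
  case (1 p)
  have "leavitt_equiv r s (mono (p @ [V y, V y] @ []) :: ('v, 'e, 'k) fel) (mono (p @ [V y] @ []))"
    by (intro leavitt_equiv_mono_context leavitt_equiv_vertex_vertex)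
  with 1 show ?thesis by simp
next
  case (2 p e)
  have "leavitt_equiv r s (mono (p @ [Gh e, V (s e)] @ []) :: ('v, 'e, 'k) fel)
      (mono (p @ [Gh e] @ []))"
    by (intro leavitt_equiv_mono_context leavitt_equiv_ghost_source)
  with 2 show ?thesis by simp
qed

lemma path_word_snoc_vertex_in_leavitt_ideal:
  assumes "walk r s y \<beta> z" "y' \<noteq> y"
  shows "(mono (path_word \<alpha> z \<beta> @ [V y']) :: ('v, 'e, 'k::field) fel) \<in> leavitt_ideal r s"
  using assms(1)
proof (cases rule: path_word_last_letter[where \<alpha> = \<alpha>])
  case (1 p)
  have "(mono (p @ [V y, V y'] @ []) :: ('v, 'e, 'k) fel) \<in> leavitt_ideal r s"
    using assms(2) by (intro mono_context_in_leavitt_ideal vertex_vertex_in_leavitt_ideal) simp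
  with 1 show ?thesis by simp
next
  case (2 p e)
  have "(mono (p @ [Gh e, V y'] @ []) :: ('v, 'e, 'k) fel) \<in> leavitt_ideal r s"
    using 2 assms(2) by (intro mono_context_in_leavitt_ideal ghost_vertex_in_leavitt_ideal) simp
  with 2 show ?thesis by simp
qed

lemma path_word_snoc_ghost_in_leavitt_ideal:
  assumes "walk r s y \<beta> z" "r f \<noteq> y"
  shows "(mono (path_word \<alpha> z \<beta> @ [Gh f]) :: ('v, 'e, 'k::field) fel) \<in> leavitt_ideal r s"
  using assms(1)
proof (cases rule: path_word_last_letter[where \<alpha> = \<alpha>])
  case (1 p)
  have "(mono (p @ [V y, Gh f] @ []) :: ('v, 'e, 'k) fel) \<in> leavitt_ideal r s"
    using assms(2) by (intro mono_context_in_leavitt_ideal vertex_ghost_in_leavitt_ideal) simp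
  with 1 show ?thesis by simp
next
  case (2 p e)
  have "(mono (p @ [Gh e, Gh f] @ []) :: ('v, 'e, 'k) fel) \<in> leavitt_ideal r s"
    using 2 assms(2) by (intro mono_context_in_leavitt_ideal ghost_ghost_in_leavitt_ideal) simp
  with 2 show ?thesis by simp
qed

definition path_word_reducible :: "('e \<Rightarrow> 'v) \<Rightarrow> ('e \<Rightarrow> 'v) \<Rightarrow> 'v \<Rightarrow> ('v, 'e, 'k::field) fel \<Rightarrow> bool"
  where "path_word_reducible r s x a \<longleftrightarrow> a \<in> leavitt_ideal r s \<or>
    (\<exists>\<alpha> z \<beta> y. walk r s x \<alpha> z \<and> walk r s y \<beta> z \<and> leavitt_equiv r s a (mono (path_word \<alpha> z \<beta>)))"

lemma path_word_reducible_equiv: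
  "leavitt_equiv r s a b \<Longrightarrow> path_word_reducible r s x b \<Longrightarrow> path_word_reducible r s x a"
  unfolding path_word_reducible_def by (metis leavitt_equiv_in_ideal leavitt_equiv_trans)

lemma path_word_reducible_path_word:
  "walk r s x \<alpha> z \<Longrightarrow> walk r s y \<beta> z \<Longrightarrow> path_word_reducible r s x (mono (path_word \<alpha> z \<beta>))"
  unfolding path_word_reducible_def by (blast intro: leavitt_equiv_refl)

lemma path_word_reducible_snoc_edge:
  assumes "walk r s x \<alpha> z" "walk r s y \<beta> z"
  shows "path_word_reducible r s x (mono (path_word \<alpha> z \<beta> @ [Ed f]) :: ('v, 'e, 'k::field) fel)"
proof (cases \<beta>)
  case Nil
  show ?thesis
  proof (cases "s f = z")
    case True
    have "leavitt_equiv r s (mono (map Ed \<alpha> @ [V (s f), Ed f] @ []) :: ('v, 'e, 'k) fel)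
        (mono (map Ed \<alpha> @ [Ed f] @ []))"
      by (intro leavitt_equiv_mono_context leavitt_equiv_source_edge)
    moreover have "leavitt_equiv r s (mono (map Ed \<alpha> @ [Ed f] @ []) :: ('v, 'e, 'k) fel)
        (mono (map Ed \<alpha> @ [Ed f, V (r f)] @ []))"
      by (intro leavitt_equiv_mono_context leavitt_equiv_sym[OF leavitt_equiv_edge_range])
    moreover have "path_word_reducible r s x
        (mono (path_word (\<alpha> @ [f]) (r f) []) :: ('v, 'e, 'k) fel)"
      using assms(1) True
      by (intro path_word_reducible_path_word[where y = "r f"]) (simp_all add: walk_snoc)
    ultimately show ?thesis
      using Nil True
      by (simp add: path_word_Nil) (meson leavitt_equiv_trans path_word_reducible_equiv)
  next
    case False
    have "(mono (map Ed \<alpha> @ [V z, Ed f] @ []) :: ('v, 'e, 'k) fel) \<in> leavitt_ideal r s"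
      using False by (intro mono_context_in_leavitt_ideal vertex_edge_in_leavitt_ideal) simp
    then show ?thesis using Nil by (simp add: path_word_reducible_def path_word_Nil)
  qed
next
  case (Cons e \<beta>')
  then have walk': "walk r s (r e) \<beta>' z" using assms(2) by simp
  show ?thesis
  proof (cases "e = f")
    case True
    have "leavitt_equiv r s (mono (path_word \<alpha> z \<beta>' @ [Gh e, Ed e] @ []) :: ('v, 'e, 'k) fel)
        (mono (path_word \<alpha> z \<beta>' @ [V (r e)] @ []))"
      by (intro leavitt_equiv_mono_context leavitt_equiv_ghost_edge)
    moreover have "leavitt_equiv r s (mono (path_word \<alpha> z \<beta>' @ [V (r e)]) :: ('v, 'e, 'k) fel)
        (mono (path_word \<alpha> z \<beta>'))"
      by (rule path_word_snoc_vertex[OF walk'])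
    moreover have "path_word_reducible r s x (mono (path_word \<alpha> z \<beta>') :: ('v, 'e, 'k) fel)"
      by (rule path_word_reducible_path_word[OF assms(1) walk'])
    ultimately show ?thesis
      using Cons True
      by (simp add: path_word_Cons) (meson leavitt_equiv_trans path_word_reducible_equiv)
  next
    case False
    have "(mono (path_word \<alpha> z \<beta>' @ [Gh e, Ed f] @ []) :: ('v, 'e, 'k) fel) \<in> leavitt_ideal r s"
      using False by (intro mono_context_in_leavitt_ideal ghost_edge_in_leavitt_ideal)
    then show ?thesis using Cons by (simp add: path_word_reducible_def path_word_Cons)
  qed
qed

lemma path_word_reducible_snoc:
  assumes "walk r s x \<alpha> z" "walk r s y \<beta> z"
  shows "path_word_reducible r s x (mono (path_word \<alpha> z \<beta> @ [g]) :: ('v, 'e, 'k::field) fel)"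
proof (cases g)
  case (V y')
  show ?thesis
  proof (cases "y' = y")
    case True
    show ?thesis
      by (rule path_word_reducible_equiv[OF _ path_word_reducible_path_word[OF assms]])
        (simp add: V True path_word_snoc_vertex[OF assms(2)])
  next
    case False
    then show ?thesis
      using V path_word_snoc_vertex_in_leavitt_ideal[OF assms(2)] unfolding path_word_reducible_def
      by blast
  qed
next
  case (Gh f)
  have "path_word_reducible r s x (mono (path_word \<alpha> z (f # \<beta>)) :: ('v, 'e, 'k) fel)"
    if "r f = y"
    using assms that by (intro path_word_reducible_path_word[where y = "s f"]) auto
  then show ?thesis
    using Gh path_word_snoc_ghost_in_leavitt_ideal[OF assms(2)]
    by (cases "r f = y") (auto simp: path_word_reducible_def path_word_Cons)
next
  case (Ed f)
  then show ?thesis using path_word_reducible_snoc_edge[OF assms] by simp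
qed

lemma path_word_reducible_vertex_word:
  "path_word_reducible r s x (mono (V x # w) :: ('v, 'e, 'k::field) fel)"
proof (induction w rule: rev_induct)
  case Nil
  have "path_word_reducible r s x (mono (path_word [] x []) :: ('v, 'e, 'k) fel)"
    by (rule path_word_reducible_path_word) simp_all
  then show ?case by (simp add: path_word_Nil)
next
  case (snoc g w)
  from snoc.IH consider
      "(mono (V x # w) :: ('v, 'e, 'k) fel) \<in> leavitt_ideal r s"
    | \<alpha> z \<beta> y where "walk r s x \<alpha> z" "walk r s y \<beta> z"
        "leavitt_equiv r s (mono (V x # w) :: ('v, 'e, 'k) fel) (mono (path_word \<alpha> z \<beta>))"
    unfolding path_word_reducible_def by blast
  then show ?case
  proof cases
    case 1
    then show ?thesis
      using mono_context_in_leavitt_ideal[OF 1, of "[]" "[g]"]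
      by (simp add: path_word_reducible_def)
  next
    case (2 \<alpha> z \<beta> y)
    have "leavitt_equiv r s (mono (V x # w @ [g]) :: ('v, 'e, 'k) fel)
        (mono (path_word \<alpha> z \<beta> @ [g]))"
      using leavitt_equiv_mono_context[OF 2(3), of "[]" "[g]"] by simp
    then show ?thesis
      by (rule path_word_reducible_equiv) (rule path_word_reducible_snoc[OF 2(1,2)])
  qed
qed

section \<open>Hereditary sets of vertices\<close>

definition hereditary :: "('e \<Rightarrow> 'v) \<Rightarrow> ('e \<Rightarrow> 'v) \<Rightarrow> 'v set \<Rightarrow> bool" where
  "hereditary r s H \<longleftrightarrow> (\<forall>e. s e \<in> H \<longrightarrow> r e \<in> H)"

lemma walk_hereditary: "walk r s x p y \<Longrightarrow> hereditary r s H \<Longrightarrow> x \<in> H \<Longrightarrow> y \<in> H"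
  by (induction p arbitrary: x) (auto simp: hereditary_def)

lemma vertex_word_vertex_in_leavitt_ideal:
  assumes H: "hereditary r s H" and H': "hereditary r s H'" and "H \<inter> H' = {}"
    and "x \<in> H" "u \<in> H'"
  shows "(mono (V x # w @ [V u]) :: ('v, 'e, 'k::field) fel) \<in> leavitt_ideal r s"
proof -
  from path_word_reducible_vertex_word[of r s x w] consider
      "(mono (V x # w) :: ('v, 'e, 'k) fel) \<in> leavitt_ideal r s"
    | \<alpha> z \<beta> y where "walk r s x \<alpha> z" "walk r s y \<beta> z"
        "leavitt_equiv r s (mono (V x # w) :: ('v, 'e, 'k) fel) (mono (path_word \<alpha> z \<beta>))"
    unfolding path_word_reducible_def by blast
  then show ?thesis
  proof cases
    case 1
    then show ?thesis using mono_context_in_leavitt_ideal[OF 1, of "[]" "[V u]"] by simp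
  next
    case (2 \<alpha> z \<beta> y)
    have "u \<noteq> y"
      using walk_hereditary[OF 2(1) H \<open>x \<in> H\<close>] walk_hereditary[OF 2(2) H'] assms(3,5) by blast
    then have "(mono (path_word \<alpha> z \<beta> @ [V u]) :: ('v, 'e, 'k) fel) \<in> leavitt_ideal r s"
      by (rule path_word_snoc_vertex_in_leavitt_ideal[OF 2(2)])
    moreover have "leavitt_equiv r s (mono (V x # w @ [V u]) :: ('v, 'e, 'k) fel)
        (mono (path_word \<alpha> z \<beta> @ [V u]))"
      using leavitt_equiv_mono_context[OF 2(3), of "[]" "[V u]"] by simp
    ultimately show ?thesis by (blast intro: leavitt_equiv_in_ideal)
  qed
qed

lemma vertex_sandwich_in_leavitt_ideal:
  assumes "hereditary r s H" "hereditary r s H'" "H \<inter> H' = {}" "x \<in> H" "u \<in> H'"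
    and m: "m \<in> fcar"
  shows "fmul (gv x) (fmul m (gv u)) \<in> leavitt_ideal r s"
proof -
  have "fmul (gv x) (fmul m (gv u))
      = (\<lambda>w. \<Sum>v\<in>{v. m v \<noteq> 0}. m v * fmul (gv x) (fmul (mono v) (gv u)) w)"
    by (subst fcar_eq_lincomb_mono[OF m]) (simp add: fmul_lincomb_left fmul_lincomb_right)
  also have "\<dots> \<in> leavitt_ideal r s"
    using m by (intro ideal_lincomb[OF is_ideal_leavitt_ideal])
      (auto simp: fcar_def fmul_mono_mono intro: vertex_word_vertex_in_leavitt_ideal[OF assms(1-5)])
  finally show ?thesis .
qed

section \<open>Passing to the quotient \<open>L\<^sub>K(E)\<close>\<close>

lemma LPA_simps [simp]:
  "kcar (LPA r s) = lcls r s ` fcar"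
  "kzero (LPA r s) = lcls r s fzero"
  "kadd (LPA r s) X Y = lcls r s (fadd (lrep X) (lrep Y))"
  "ksmul (LPA r s) k X = lcls r s (fsmul k (lrep X))"
  "kmul (LPA r s) X Y = lcls r s (fmul (lrep X) (lrep Y))"
  by (simp_all add: LPA_def)

lemma lcls_subset_fcar: "lcls r s x \<subseteq> fcar"
  by (auto simp: lcls_def)

lemma lrep_mem:
  assumes "x \<in> fcar"
  shows "lrep (lcls r s x) \<in> lcls r s x"
proof -
  have "x \<in> lcls r s x"
    using assms leavitt_equiv_refl[of r s x] by (simp add: lcls_def leavitt_equiv_def)
  then show ?thesis unfolding lrep_def by (rule someI[where P = "\<lambda>y. y \<in> lcls r s x"])
qed

lemma lrep_mem_kcar: "X \<in> kcar (LPA r s) \<Longrightarrow> lrep X \<in> X"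
  using lrep_mem by auto

lemma lcls_eq_fzero: "x \<in> leavitt_ideal r s \<Longrightarrow> lcls r s x = lcls r s fzero"
  by (auto simp: lcls_def leavitt_ideal_fsub
      intro: leavitt_equiv_in_ideal[unfolded leavitt_equiv_def])

lemma lcls_subset_ideal:
  assumes "is_ideal FA P" "leavitt_ideal r s \<subseteq> P" "t \<in> P"
  shows "lcls r s t \<subseteq> P"
proof
  fix y assume "y \<in> lcls r s t"
  then have "fsub y t \<in> P" using assms(2) by (auto simp: lcls_def)
  then have "fadd t (fsub y t) \<in> P" using assms(1,3) by (simp add: is_ideal_def FA_def)
  then show "y \<in> P" by (simp add: fadd_fsub_cancel)
qed

text \<open>Such a \<open>P\<close> is a union of residue classes, hence the preimage of an ideal of the quotient.\<close>

lemma is_ideal_LPA_classes: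
  fixes P :: "('v, 'e, 'k::field) fel set"
  assumes P: "is_ideal FA P" "leavitt_ideal r s \<subseteq> P"
  shows "is_ideal (LPA r s) {X \<in> kcar (LPA r s). X \<subseteq> P}"
proof -
  let ?Q = "{X \<in> kcar (LPA r s). X \<subseteq> P}"
  have P_fcar: "P \<subseteq> fcar" using P(1) by (simp add: is_ideal_def FA_def)
  have cls: "lcls r s t \<in> ?Q" if "t \<in> P" for t
    using lcls_subset_ideal[OF P that] that P_fcar by auto
  have rep: "lrep X \<in> P" if "X \<in> ?Q" for X
    using that lrep_mem_kcar by blast
  have rep_fcar: "lrep X \<in> fcar" if "X \<in> kcar (LPA r s)" for X :: "('v, 'e, 'k) fel set"
    using that lrep_mem_kcar lcls_subset_fcar by fastforce
  show ?thesis
    unfolding is_ideal_def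
  proof (intro conjI ballI allI)
    show "?Q \<subseteq> kcar (LPA r s)" "kzero (LPA r s) \<in> ?Q"
      using cls P(1) by (auto simp: is_ideal_def FA_def)
  next
    fix X Y :: "('v, 'e, 'k) fel set" assume "X \<in> ?Q" "Y \<in> ?Q"
    then show "kadd (LPA r s) X Y \<in> ?Q"
      using cls rep P(1) by (simp add: is_ideal_def FA_def)
  next
    fix k and X :: "('v, 'e, 'k) fel set" assume "X \<in> ?Q"
    then show "ksmul (LPA r s) k X \<in> ?Q"
      using cls rep P(1) by (simp add: is_ideal_def FA_def)
  next
    fix Z X :: "('v, 'e, 'k) fel set" assume "Z \<in> kcar (LPA r s)" "X \<in> ?Q"
    then show "kmul (LPA r s) Z X \<in> ?Q"
      using cls rep rep_fcar[of Z] P(1) by (simp add: is_ideal_def FA_def)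
  next
    fix Z X :: "('v, 'e, 'k) fel set" assume "Z \<in> kcar (LPA r s)" "X \<in> ?Q"
    then show "kmul (LPA r s) X Z \<in> ?Q"
      using cls rep rep_fcar[of Z] P(1) by (simp add: is_ideal_def FA_def)
  qed
qed

lemma is_subspace_LPA_zero:
  "is_subspace (LPA r s :: (('v, 'e, 'k::field) fel set, 'k) kalg) {kzero (LPA r s)}"
proof -
  have "lrep (lcls r s fzero) \<in> lcls r s (fzero :: ('v, 'e, 'k) fel)"
    by (rule lrep_mem[OF fzero_fcar])
  then have "lrep (lcls r s (fzero :: ('v, 'e, 'k) fel)) \<in> leavitt_ideal r s"
    by (simp add: lcls_def)
  then show ?thesis
    unfolding is_subspace_def
    by (auto simp: fzero_fcar lcls_eq_fzero leavitt_ideal_fadd leavitt_ideal_fsmul)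
qed

lemma ideal_product_LPA_eq_zero:
  fixes M N :: "('v, 'e, 'k::field) fel set"
  assumes M: "is_ideal FA M" "leavitt_ideal r s \<subseteq> M" and N: "is_ideal FA N" "leavitt_ideal r s \<subseteq> N"
    and "p \<in> M" "q \<in> N" and MN: "\<And>a b. a \<in> M \<Longrightarrow> b \<in> N \<Longrightarrow> fmul a b \<in> leavitt_ideal r s"
  shows "ideal_product (LPA r s)
      (gen_ideal (LPA r s) {lcls r s p}) (gen_ideal (LPA r s) {lcls r s q}) = {kzero (LPA r s)}"
proof -
  have gen: "gen_ideal (LPA r s) {lcls r s t} \<subseteq> {X \<in> kcar (LPA r s). X \<subseteq> P}"
    if "is_ideal FA P" "leavitt_ideal r s \<subseteq> P" "t \<in> P" for P :: "('v, 'e, 'k) fel set" and t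
    using that lcls_subset_ideal[OF that] by (intro gen_ideal_subset is_ideal_LPA_classes)
      (auto simp: is_ideal_def FA_def)
  have "kmul (LPA r s) X Y = kzero (LPA r s)"
    if "X \<in> gen_ideal (LPA r s) {lcls r s p}" "Y \<in> gen_ideal (LPA r s) {lcls r s q}" for X Y
  proof -
    have "lrep X \<in> M" "lrep Y \<in> N"
      using that gen[OF M \<open>p \<in> M\<close>] gen[OF N \<open>q \<in> N\<close>] lrep_mem_kcar by blast+
    then show ?thesis by (simp add: MN lcls_eq_fzero)
  qed
  then have "{kmul (LPA r s) X Y | X Y. X \<in> gen_ideal (LPA r s) {lcls r s p}
      \<and> Y \<in> gen_ideal (LPA r s) {lcls r s q}} \<subseteq> {kzero (LPA r s)}"
    by blast
  then show ?thesis
    unfolding ideal_product_def using is_subspace_LPA_zero[of r s]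
    by (intro equalityI) (blast, auto simp: is_subspace_def)
qed

section \<open>Annihilators modulo the Leavitt relations\<close>

definition sandwich_annihilator ::
    "('e \<Rightarrow> 'v) \<Rightarrow> ('e \<Rightarrow> 'v) \<Rightarrow> ('v, 'e, 'k::field) fel \<Rightarrow> ('v, 'e, 'k) fel set"
  where "sandwich_annihilator r s a = {b \<in> fcar. \<forall>m\<in>fcar. fmul a (fmul m b) \<in> leavitt_ideal r s}"

definition left_annihilator ::
    "('e \<Rightarrow> 'v) \<Rightarrow> ('e \<Rightarrow> 'v) \<Rightarrow> ('v, 'e, 'k::field) fel set \<Rightarrow> ('v, 'e, 'k) fel set"
  where "left_annihilator r s N = {a \<in> fcar. \<forall>b\<in>N. fmul a b \<in> leavitt_ideal r s}"

lemma is_ideal_sandwich_annihilator: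
  fixes a :: "('v, 'e, 'k::field) fel"
  assumes a: "a \<in> fcar"
  shows "is_ideal FA (sandwich_annihilator r s a)"
proof -
  let ?N = "sandwich_annihilator r s a"
  have "fmul z b \<in> ?N" if "z \<in> fcar" "b \<in> ?N" for z b
  proof -
    have "fmul a (fmul m (fmul z b)) = fmul a (fmul (fmul m z) b)" for m
      by (simp add: fmul_assoc)
    then show ?thesis using that by (auto simp: sandwich_annihilator_def fcar_fmul)
  qed
  moreover have "fmul b z \<in> ?N" if "z \<in> fcar" "b \<in> ?N" for z b
  proof -
    have "fmul a (fmul m (fmul b z)) = fmul (fmul a (fmul m b)) z" for m
      by (simp add: fmul_assoc)
    then show ?thesis
      using that by (auto simp: sandwich_annihilator_def fcar_fmul leavitt_ideal_fmul_right)
  qed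
  moreover have "fadd b b' \<in> ?N" if "b \<in> ?N" "b' \<in> ?N" for b b'
    using that by (simp add: sandwich_annihilator_def fmul_fadd_right fcar_fadd leavitt_ideal_fadd)
  moreover have "fsmul k b \<in> ?N" if "b \<in> ?N" for k b
    using that
    by (simp add: sandwich_annihilator_def fmul_fsmul_right fcar_fsmul leavitt_ideal_fsmul)
  moreover have "fzero \<in> ?N" "?N \<subseteq> fcar"
    by (auto simp: sandwich_annihilator_def fzero_fcar leavitt_ideal_fzero)
  ultimately show ?thesis
    by (simp add: is_ideal_def FA_def)
qed

lemma leavitt_ideal_subset_sandwich_annihilator:
  "a \<in> fcar \<Longrightarrow> leavitt_ideal r s \<subseteq> sandwich_annihilator r s a"
  using leavitt_ideal_subset_fcar
  by (auto simp: sandwich_annihilator_def intro!: leavitt_ideal_fmul_left)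

lemma is_ideal_left_annihilator:
  fixes N :: "('v, 'e, 'k::field) fel set"
  assumes N: "is_ideal FA N"
  shows "is_ideal FA (left_annihilator r s N)"
proof -
  let ?M = "left_annihilator r s N"
  have "fmul z a \<in> ?M" if "z \<in> fcar" "a \<in> ?M" for z a
    using that by (auto simp: left_annihilator_def fcar_fmul fmul_assoc leavitt_ideal_fmul_left)
  moreover have "fmul a z \<in> ?M" if "z \<in> fcar" "a \<in> ?M" for z a
    using that N by (auto simp: left_annihilator_def fcar_fmul fmul_assoc is_ideal_def FA_def)
  moreover have "fadd a a' \<in> ?M" if "a \<in> ?M" "a' \<in> ?M" for a a'
    using that by (simp add: left_annihilator_def fmul_fadd_left fcar_fadd leavitt_ideal_fadd)
  moreover have "fsmul k a \<in> ?M" if "a \<in> ?M" for k a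
    using that by (simp add: left_annihilator_def fmul_fsmul_left fcar_fsmul leavitt_ideal_fsmul)
  moreover have "fzero \<in> ?M" "?M \<subseteq> fcar"
    by (auto simp: left_annihilator_def fzero_fcar leavitt_ideal_fzero)
  ultimately show ?thesis
    by (simp add: is_ideal_def FA_def)
qed

lemma leavitt_ideal_subset_left_annihilator:
  "N \<subseteq> fcar \<Longrightarrow> leavitt_ideal r s \<subseteq> left_annihilator r s N"
  using leavitt_ideal_subset_fcar
  by (auto simp: left_annihilator_def intro!: leavitt_ideal_fmul_right)

lemma sandwich_annihilator_vertex:
  assumes "b \<in> sandwich_annihilator r s (gv v)"
  shows "fmul (gv v) b \<in> leavitt_ideal r s"
proof -
  have b: "b \<in> fcar" "fmul (gv v) (fmul (gv v) b) \<in> leavitt_ideal r s"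
    using assms by (simp_all add: sandwich_annihilator_def mono_fcar)
  have "leavitt_equiv r s (fmul (gv v) b) (fmul (mono [V v, V v]) b)"
    by (rule leavitt_equiv_fmul_right[OF leavitt_equiv_sym[OF leavitt_equiv_vertex_vertex] b(1)])
  moreover have "fmul (mono [V v, V v]) b = fmul (gv v) (fmul (gv v) b)"
    by (simp add: fmul_assoc[symmetric] fmul_mono_mono)
  ultimately show ?thesis using b(2) by (simp add: leavitt_equiv_in_ideal)
qed

text \<open>If \<open>p = p v\<close>, \<open>q = u q\<close> and \<open>v L u = 0\<close>, then \<open>\<langle>p\<rangle>\<langle>q\<rangle> = 0\<close>: the ideal generated by \<open>q\<close> lies in
  \<open>N = {b. v L b = 0}\<close>, and the one generated by \<open>p\<close> in the left annihilator of \<open>N\<close>.\<close>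

lemma ideal_product_LPA_eq_zero_if_vertex_sandwich:
  fixes p q :: "('v, 'e, 'k::field) fel"
  assumes sandwich:
      "\<forall>m\<in>fcar. fmul (gv v) (fmul m (gv u)) \<in> (leavitt_ideal r s :: ('v, 'e, 'k) fel set)"
    and p: "p \<in> fcar" "leavitt_equiv r s p (fmul p (gv v))"
    and q: "q \<in> fcar" "leavitt_equiv r s q (fmul (gv u) q)"
  shows "ideal_product (LPA r s)
      (gen_ideal (LPA r s) {lcls r s p}) (gen_ideal (LPA r s) {lcls r s q}) = {kzero (LPA r s)}"
proof -
  define N where "N = sandwich_annihilator r s (gv v :: ('v, 'e, 'k) fel)"
  define M where "M = left_annihilator r s N"
  have v: "(gv v :: ('v, 'e, 'k) fel) \<in> fcar" by (simp add: mono_fcar)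
  have N: "is_ideal FA N" "leavitt_ideal r s \<subseteq> N"
    unfolding N_def using v
    by (simp_all add: is_ideal_sandwich_annihilator leavitt_ideal_subset_sandwich_annihilator)
  have "N \<subseteq> fcar" using N(1) by (simp add: is_ideal_def FA_def)
  then have M: "is_ideal FA M" "leavitt_ideal r s \<subseteq> M"
    unfolding M_def
    by (simp_all add: is_ideal_left_annihilator[OF N(1)] leavitt_ideal_subset_left_annihilator)
  have "p \<in> M"
  proof -
    have "fmul p b \<in> leavitt_ideal r s" if "b \<in> N" for b
    proof -
      have "leavitt_equiv r s (fmul p b) (fmul (fmul p (gv v)) b)"
        using that p(2) N(1) by (intro leavitt_equiv_fmul_right) (auto simp: is_ideal_def FA_def)
      moreover have "fmul p (fmul (gv v) b) \<in> leavitt_ideal r s"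
        using sandwich_annihilator_vertex[of b r s v] that p(1) N_def
        by (simp add: leavitt_ideal_fmul_left)
      ultimately show ?thesis by (simp add: fmul_assoc leavitt_equiv_in_ideal)
    qed
    then show ?thesis using p(1) by (simp add: M_def left_annihilator_def)
  qed
  moreover have "q \<in> N"
  proof -
    have "fmul (gv v) (fmul m q) \<in> leavitt_ideal r s" if "m \<in> fcar" for m
    proof -
      have "leavitt_equiv r s (fmul (gv v) (fmul m q)) (fmul (gv v) (fmul m (fmul (gv u) q)))"
        using q(2) that v by (intro leavitt_equiv_fmul_left)
      moreover have "fmul (fmul (gv v) (fmul m (gv u))) q \<in> leavitt_ideal r s"
        using sandwich that q(1) by (simp add: leavitt_ideal_fmul_right)
      ultimately show ?thesis by (simp add: fmul_assoc leavitt_equiv_in_ideal)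
    qed
    then show ?thesis using q(1) by (simp add: N_def sandwich_annihilator_def)
  qed
  moreover have "fmul a b \<in> leavitt_ideal r s" if "a \<in> M" "b \<in> N" for a b
    using that by (simp add: M_def left_annihilator_def)
  ultimately show ?thesis
    by (rule ideal_product_LPA_eq_zero[OF M N])
qed

section \<open>Cycles without exits\<close>

lemma cycle_nonempty: "is_cycle r s c \<Longrightarrow> c \<noteq> []"
  by (simp add: is_cycle_def is_path_def)

lemma cycle_range_nth:
  assumes "is_cycle r s c" "i < length c"
  shows "r (c ! i) = s (c ! (Suc i mod length c))"
proof (cases "Suc i < length c")
  case True
  then show ?thesis using assms(1) by (simp add: is_cycle_def is_path_def)
next
  case False
  then have "Suc i = length c" using assms(2) by simp
  then have "i = length c - 1" "Suc i mod length c = 0" by simp_all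
  moreover have "c \<noteq> []" by (rule cycle_nonempty[OF assms(1)])
  ultimately show ?thesis
    using assms(1) by (simp add: is_cycle_def last_conv_nth hd_conv_nth)
qed

lemma cycle_vertices_subset_hereditary:
  assumes c: "is_cycle r s c" and H: "hereditary r s H" and "y \<in> s ` set c" "y \<in> H"
  shows "s ` set c \<subseteq> H"
proof -
  obtain j where j: "j < length c" "s (c ! j) = y"
    using assms(3) by (auto simp: in_set_conv_nth)
  then have n: "0 < length c" by linarith
  have around: "s (c ! ((j + k) mod length c)) \<in> H" for k
  proof (induction k)
    case 0
    then show ?case using j assms(4) by simp
  next
    case (Suc k)
    have "r (c ! ((j + k) mod length c)) = s (c ! ((j + Suc k) mod length c))"
      using cycle_range_nth[OF c, of "(j + k) mod length c"] n by (simp add: mod_Suc_eq)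
    moreover have "r (c ! ((j + k) mod length c)) \<in> H"
      using Suc H by (simp add: hereditary_def)
    ultimately show ?case by simp
  qed
  show ?thesis
  proof
    fix x assume "x \<in> s ` set c"
    then obtain i where i: "i < length c" "x = s (c ! i)" by (auto simp: in_set_conv_nth)
    then have "(j + (length c - j + i)) mod length c = i" using j(1) by simp
    then show "x \<in> H" using around[of "length c - j + i"] i by simp
  qed
qed

lemma edge_of_exitless_cycle:
  assumes "\<not> has_exit s c" "s e \<in> s ` set c"
  shows "e \<in> set c"
proof -
  obtain i where "i < length c" "s e = s (c ! i)"
    using assms(2) by (auto simp: in_set_conv_nth)
  with assms(1) show ?thesis unfolding has_exit_def by blast
qed

lemma hereditary_exitless_cycle:
  assumes c: "is_cycle r s c" and "\<not> has_exit s c"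
  shows "hereditary r s (s ` set c)"
  unfolding hereditary_def
proof (intro allI impI)
  fix e assume "s e \<in> s ` set c"
  then have "e \<in> set c" by (rule edge_of_exitless_cycle[OF assms(2)])
  then obtain i where "i < length c" "e = c ! i" by (auto simp: in_set_conv_nth)
  then have "r e = s (c ! (Suc i mod length c))"
    using cycle_range_nth[OF c] by simp
  moreover have "Suc i mod length c < length c"
    using cycle_nonempty[OF c] by simp
  ultimately show "r e \<in> s ` set c"
    by (simp add: image_eqI)
qed

lemma exitless_cycles_disjoint:
  assumes "is_cycle r s c" "is_cycle r s d" "set c \<noteq> set d" "\<not> has_exit s c" "\<not> has_exit s d"
  shows "s ` set c \<inter> s ` set d = {}"
proof (rule ccontr)
  assume "s ` set c \<inter> s ` set d \<noteq> {}"
  then obtain y where y: "y \<in> s ` set c" "y \<in> s ` set d" by blast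
  have "s ` set d \<subseteq> s ` set c"
    by (rule cycle_vertices_subset_hereditary[OF assms(2)
          hereditary_exitless_cycle[OF assms(1,4)] y(2,1)])
  then have "set d \<subseteq> set c"
    using edge_of_exitless_cycle[OF assms(4)] by blast
  have "s ` set c \<subseteq> s ` set d"
    by (rule cycle_vertices_subset_hereditary[OF assms(1)
          hereditary_exitless_cycle[OF assms(2,5)] y])
  then have "set c \<subseteq> set d"
    using edge_of_exitless_cycle[OF assms(5)] by blast
  with \<open>set d \<subseteq> set c\<close> assms(3) show False by blast
qed

section \<open>Polynomials in a cycle\<close>

definition cycle_power_word :: "('e \<Rightarrow> 'v) \<Rightarrow> 'e list \<Rightarrow> nat \<Rightarrow> ('v, 'e) lgen list" where
  "cycle_power_word s c i = (if i = 0 then [V (s (hd c))] else concat (replicate i (map Ed c)))"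

lemma poly_cycle_conv_lincomb:
  "poly_cycle s f c = (\<lambda>w. \<Sum>i\<in>{0..degree f}. coeff f i * mono (cycle_power_word s c i) w)"
proof (rule ext)
  fix w
  have "(\<Sum>i\<in>{0..degree f}. coeff f i * mono (cycle_power_word s c i) w)
      = coeff f 0 * mono (cycle_power_word s c 0) w
        + (\<Sum>i\<in>{Suc 0..degree f}. coeff f i * mono (cycle_power_word s c i) w)"
    by (rule sum.atLeast_Suc_atMost) simp
  also have "(\<Sum>i\<in>{Suc 0..degree f}. coeff f i * mono (cycle_power_word s c i) w)
      = (\<Sum>i\<in>{1..degree f}. if w = concat (replicate i (map Ed c)) then coeff f i else 0)"
    by (rule sum.cong) (auto simp: cycle_power_word_def Defs.mono_def)
  finally show "poly_cycle s f c w
      = (\<Sum>i\<in>{0..degree f}. coeff f i * mono (cycle_power_word s c i) w)"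
    by (simp add: poly_cycle_def cycle_power_word_def Defs.mono_def)
qed

lemma poly_cycle_fcar: "c \<noteq> [] \<Longrightarrow> poly_cycle s f c \<in> fcar"
  unfolding poly_cycle_conv_lincomb
  by (rule ideal_lincomb[OF is_ideal_fcar]) (simp_all add: mono_fcar cycle_power_word_def)

lemma leavitt_equiv_cycle_power_word_base_right:
  assumes "is_cycle r s c"
  shows "leavitt_equiv r s (mono (cycle_power_word s c i) :: ('v, 'e, 'k::field) fel)
    (mono (cycle_power_word s c i @ [V (s (hd c))]))"
proof (cases i)
  case 0
  then show ?thesis
    by (simp add: cycle_power_word_def leavitt_equiv_sym[OF leavitt_equiv_vertex_vertex])
next
  case (Suc k)
  define p :: "('v, 'e) lgen list" where "p = concat (replicate k (map Ed c)) @ map Ed (butlast c)"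
  have "c \<noteq> []" by (rule cycle_nonempty[OF assms])
  then have "map Ed c = map Ed (butlast c) @ [Ed (last c)]"
    by (metis append_butlast_last_id list.simps(8,9) map_append)
  then have w: "cycle_power_word s c i = p @ [Ed (last c)] @ []"
    using Suc by (simp add: p_def cycle_power_word_def replicate_append_same[symmetric])
  have "leavitt_equiv r s (mono (p @ [Ed (last c)] @ []) :: ('v, 'e, 'k) fel)
      (mono (p @ [Ed (last c), V (r (last c))] @ []))"
    by (intro leavitt_equiv_mono_context leavitt_equiv_sym[OF leavitt_equiv_edge_range])
  moreover have "r (last c) = s (hd c)" using assms by (simp add: is_cycle_def)
  ultimately show ?thesis by (simp add: w)
qed

lemma leavitt_equiv_cycle_power_word_base_left:
  assumes "c \<noteq> []"
  shows "leavitt_equiv r s (mono (cycle_power_word s c i) :: ('v, 'e, 'k::field) fel)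
    (mono (V (s (hd c)) # cycle_power_word s c i))"
proof (cases i)
  case 0
  then show ?thesis
    by (simp add: cycle_power_word_def leavitt_equiv_sym[OF leavitt_equiv_vertex_vertex])
next
  case (Suc k)
  define q :: "('v, 'e) lgen list" where "q = map Ed (tl c) @ concat (replicate k (map Ed c))"
  have w: "cycle_power_word s c i = [] @ [Ed (hd c)] @ q"
    using assms Suc by (cases c) (simp_all add: q_def cycle_power_word_def)
  have "leavitt_equiv r s (mono ([] @ [Ed (hd c)] @ q) :: ('v, 'e, 'k) fel)
      (mono ([] @ [V (s (hd c)), Ed (hd c)] @ q))"
    by (intro leavitt_equiv_mono_context leavitt_equiv_sym[OF leavitt_equiv_source_edge])
  then show ?thesis by (simp add: w)
qed

lemma poly_cycle_base_right:
  assumes "is_cycle r s c"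
  shows "leavitt_equiv r s (poly_cycle s f c) (fmul (poly_cycle s f c) (gv (s (hd c))))"
  unfolding poly_cycle_conv_lincomb fmul_lincomb_left
  by (intro leavitt_equiv_lincomb)
    (simp_all add: fmul_mono_mono leavitt_equiv_cycle_power_word_base_right[OF assms])

lemma poly_cycle_base_left:
  assumes "c \<noteq> []"
  shows "leavitt_equiv r s (poly_cycle s f c) (fmul (gv (s (hd c))) (poly_cycle s f c))"
  unfolding poly_cycle_conv_lincomb fmul_lincomb_right
  by (intro leavitt_equiv_lincomb)
    (simp_all add: fmul_mono_mono leavitt_equiv_cycle_power_word_base_left[OF assms])

theorem lemma2p2:
  fixes r s :: "'e \<Rightarrow> 'v" and c d :: "'e list" and f g :: "'k::field poly"
  assumes "is_cycle r s c" and "is_cycle r s d" and "set c \<noteq> set d"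
    and "\<not> has_exit s c" and "\<not> has_exit s d"
    and "coeff f 0 \<noteq> 0" and "coeff g 0 \<noteq> 0"
  shows "ideal_product (LPA r s)
           (gen_ideal (LPA r s) {lcls r s (poly_cycle s f c)})
           (gen_ideal (LPA r s) {lcls r s (poly_cycle s g d)})
         = {kzero (LPA r s)}"
proof -
  have c: "c \<noteq> []" and d: "d \<noteq> []"
    using assms(1,2) by (simp_all add: cycle_nonempty)
  have sandwich: "\<forall>m\<in>fcar. fmul (gv (s (hd c))) (fmul m (gv (s (hd d))))
      \<in> (leavitt_ideal r s :: ('v, 'e, 'k) fel set)"
    by (intro ballI vertex_sandwich_in_leavitt_ideal[OF hereditary_exitless_cycle[OF assms(1,4)]
          hereditary_exitless_cycle[OF assms(2,5)] exitless_cycles_disjoint[OF assms(1-5)]])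
      (simp_all add: c d)
  show ?thesis
    by (rule ideal_product_LPA_eq_zero_if_vertex_sandwich[OF sandwich poly_cycle_fcar[OF c]
          poly_cycle_base_right[OF assms(1)] poly_cycle_fcar[OF d] poly_cycle_base_left[OF d]])
qed

end
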